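(* In the ring $\mathbb{Q}(a,b)[[q]]$ of formal power series in $q$ with coefficients rational functions of $a,b$, \[ 1+\sum_{n=1}^{\infty}\frac{q^{n}}{(aq;q)_n\,(bq;q)_n} =(1-a^{-1})\left(1+\sum_{n=1}^{\infty}\frac{(-1)^{n}q^{\binom{n+1}{2}}b^{n}a^{-n}}{(bq;q)_n}\right) +a^{-1}\sum_{n=0}^{\infty}(-1)^{n}q^{\binom{n+1}{2}}b^{n}a^{-n}\prod_{k=1}^{\infty}\frac{1}{(1-aq^{k})(1-bq^{k})}. \]
   Context: For an indeterminate or element $p$ and $n\ge 0$, $(p;q)_n=(1-p)(1-pq)\cdots(1-pq^{n-1})$, so $(aq;q)_n=(1-aq)(1-aq^2)\cdots(1-aq^n)$. *)

theory Defs
  imports "HOL-Analysis.Analysis" "HOL-Computational_Algebra.Formal_Power_Series"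
    "HOL-Computational_Algebra.Fraction_Field" "HOL-Computational_Algebra.Polynomial"
begin

text \<open>Q(a,b) as the fraction field of Q[a][b]: rat poly poly, inner variable a, outer b.\<close>
type_synonym ratfun = "rat poly poly fract"

definition var_a :: ratfun where "var_a = Fract [:[:0, 1:]:] 1"
definition var_b :: ratfun where "var_b = Fract [:0, 1:] 1"

definition qpoch :: "'a::comm_ring_1 fps \<Rightarrow> nat \<Rightarrow> 'a fps" where
  "qpoch p n = (\<Prod>j<n. 1 - p * fps_X ^ j)"

end

theory Submission imports Defs begin

(*
  Write u_n = 1/(aq;q)_n and v_n = 1/(bq;q)_n.  Everything rests on the two relations
  u_n - u_(n-1) = a q^n u_n  and  v_n - v_(n-1) = b q^n v_n.

  Summation by parts with the first relation expresses the shifted partial sums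
  T_k(N) = sum_(n<N) q^(n+1) u_(n+1) v_(n+1+k) through T_(k+1)(N-1); iterating this
  gives a closed form for T_0(N), and a telescoping sum built from the second relation
  turns it into an EXACT finite identity: the truncated left-hand side equals the
  truncated right-hand side plus a remainder that is divisible by q^N.

  On the analytic side (first section), a sequence of power series whose consecutive
  differences are divisible by ever higher powers of q converges, and its limit agrees
  with the N-th term modulo q^N; an identity holding modulo q^N at every stage N thus
  passes to the limits.
*)

section \<open>Divisibility by powers of the variable and convergence\<close>

lemma fps_X_power_dvd_iff:
  "fps_X ^ n dvd (f :: 'a::field fps) \<longleftrightarrow> (\<forall>i<n. fps_nth f i = 0)"
proof (cases "f = 0")
  case False
  then have "fps_X ^ n dvd f \<longleftrightarrow> n \<le> subdegree f"
    by (simp add: fps_dvd_iff)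
  also have "\<dots> \<longleftrightarrow> (\<forall>i<n. fps_nth f i = 0)"
    using False by (auto intro: subdegree_geI nth_less_subdegree_zero order_less_le_trans)
  finally show ?thesis .
qed simp

lemma fps_eq_if_X_power_dvd_diff:
  fixes f g :: "'a::field fps"
  assumes "\<And>n. fps_X ^ n dvd f - g"
  shows "f = g"
proof (rule fps_ext)
  fix n
  have "fps_nth (f - g) n = 0"
    using assms[of "Suc n"] unfolding fps_X_power_dvd_iff by simp
  then show "fps_nth f n = fps_nth g n" by simp
qed

lemma fps_limit_of_X_power_dvd_steps:
  fixes F :: "nat \<Rightarrow> 'a::field fps"
  assumes step: "\<And>n. fps_X ^ n dvd F (Suc n) - F n"
  obtains G where "F \<longlonglongrightarrow> G" and "\<And>n. fps_X ^ n dvd G - F n"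
proof -
  have stable: "fps_X ^ n dvd F m - F n" if "n \<le> m" for n m
    using that
  proof (induction m rule: dec_induct)
    case (step m)
    have "fps_X ^ n dvd F (Suc m) - F m"
      using dvd_trans[OF le_imp_power_dvd[OF step.hyps(1)] assms] .
    then have "fps_X ^ n dvd (F (Suc m) - F m) + (F m - F n)"
      using step.IH by (rule dvd_add)
    then show ?case by simp
  qed simp
  define G where "G = Abs_fps (\<lambda>i. fps_nth (F (Suc i)) i)"
  have agree: "fps_nth G i = fps_nth (F m) i" if "i < m" for i m
    using stable[of "Suc i" m] that unfolding fps_X_power_dvd_iff by (simp add: G_def)
  show thesis
  proof
    show "F \<longlonglongrightarrow> G"
    proof (rule tendsto_fpsI)
      fix i
      show "eventually (\<lambda>m. fps_nth (F m) i = fps_nth G i) sequentially"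
        unfolding eventually_sequentially
      proof (intro exI[of _ "Suc i"] allI impI)
        fix m assume "Suc i \<le> m"
        then show "fps_nth (F m) i = fps_nth G i" using agree[of i m] by simp
      qed
    qed
    show "fps_X ^ n dvd G - F n" for n
      by (simp add: fps_X_power_dvd_iff agree)
  qed
qed

lemma fps_sums_of_X_power_dvd:
  fixes f :: "nat \<Rightarrow> 'a::field fps"
  assumes "\<And>n. fps_X ^ n dvd f n"
  obtains G where "f sums G" and "\<And>n. fps_X ^ n dvd G - (\<Sum>i<n. f i)"
  using fps_limit_of_X_power_dvd_steps[of "\<lambda>n. \<Sum>i<n. f i"] assms
  unfolding sums_def by auto

lemma fps_identity_limit:
  fixes A B C D :: "nat \<Rightarrow> 'a::field fps"
  assumes A: "\<And>N. fps_X ^ N dvd GA - A N" and B: "\<And>N. fps_X ^ N dvd GB - B N"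
    and C: "\<And>N. fps_X ^ N dvd GC - C N" and D: "\<And>N. fps_X ^ N dvd GD - D N"
    and finite: "\<And>N. fps_X ^ N dvd A N - (\<alpha> * B N + \<beta> * C N * D N)"
  shows "GA = \<alpha> * GB + \<beta> * GC * GD"
proof (rule fps_eq_if_X_power_dvd_diff)
  fix N
  have "GA - (\<alpha> * GB + \<beta> * GC * GD) =
      (GA - A N) + (A N - (\<alpha> * B N + \<beta> * C N * D N))
      - \<alpha> * (GB - B N) - \<beta> * (GC * (GD - D N) + (GC - C N) * D N)"
    by (simp add: algebra_simps)
  moreover have "fps_X ^ N dvd \<dots>"
  proof (rule dvd_diff[OF dvd_diff[OF dvd_add[OF A finite]]])
    show "fps_X ^ N dvd \<alpha> * (GB - B N)"
      using B by (rule dvd_mult)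
    show "fps_X ^ N dvd \<beta> * (GC * (GD - D N) + (GC - C N) * D N)"
      using dvd_add[OF dvd_mult[OF D] dvd_mult2[OF C]] by (rule dvd_mult)
  qed
  ultimately show "fps_X ^ N dvd GA - (\<alpha> * GB + \<beta> * GC * GD)" by (simp only:)
qed

section \<open>Reciprocals of q-Pochhammer symbols\<close>

definition qinv :: "'a::field \<Rightarrow> nat \<Rightarrow> 'a fps" where
  "qinv c n = inverse (qpoch (fps_const c * fps_X) n)"

lemma qinv_0 [simp]: "qinv c 0 = 1"
  by (simp add: qinv_def qpoch_def)

lemma qinv_Suc: "qinv c (Suc n) = qinv c n * inverse (1 - fps_const c * fps_X ^ Suc n)"
  by (simp add: qinv_def qpoch_def fps_inverse_mult mult.assoc)

lemma qinv_Suc_diff: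
  "qinv c (Suc n) - qinv c n = fps_const c * fps_X ^ Suc n * qinv c (Suc n)"
proof -
  have "inverse (1 - fps_const c * fps_X ^ Suc n) * (1 - fps_const c * fps_X ^ Suc n) = 1"
    by (rule inverse_mult_eq_1) simp
  then have "qinv c (Suc n) * (1 - fps_const c * fps_X ^ Suc n) = qinv c n"
    by (simp add: qinv_Suc mult.assoc)
  then show ?thesis by (simp add: algebra_simps)
qed

lemma qinv_stable:
  assumes "r \<le> n"
  shows "fps_X ^ Suc r dvd qinv c r - qinv c n"
  using assms
proof (induction n rule: dec_induct)
  case (step n)
  have "fps_X ^ Suc r dvd fps_X ^ Suc n"
    by (rule le_imp_power_dvd) (use step.hyps(1) in simp)
  then have "fps_X ^ Suc r dvd fps_const c * fps_X ^ Suc n * qinv c (Suc n)"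
    by (intro dvd_mult2 dvd_mult)
  then have "fps_X ^ Suc r dvd (qinv c r - qinv c n) - (qinv c (Suc n) - qinv c n)"
    using step.IH by (simp add: qinv_Suc_diff dvd_diff)
  then show ?case by simp
qed simp

lemma qinv_product_step:
  "fps_X ^ Suc n dvd qinv a (Suc n) * qinv b (Suc n) - qinv a n * qinv b n"
proof -
  have "qinv a (Suc n) * qinv b (Suc n) - qinv a n * qinv b n =
      (qinv a (Suc n) - qinv a n) * qinv b (Suc n) + qinv a n * (qinv b (Suc n) - qinv b n)"
    by (simp add: algebra_simps)
  also have "\<dots> = fps_X ^ Suc n * (fps_const a * qinv a (Suc n) * qinv b (Suc n)
      + fps_const b * qinv a n * qinv b (Suc n))"
    unfolding qinv_Suc_diff by (simp add: algebra_simps)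
  finally show ?thesis by simp
qed

section \<open>The finite identity\<close>

text \<open>The terms \<open>(-b/a)^j q^(jk + binom(j+1,2))\<close> produced by iterating summation by parts.\<close>
definition qterm :: "'a::field \<Rightarrow> 'a \<Rightarrow> nat \<Rightarrow> nat \<Rightarrow> 'a fps" where
  "qterm a b k j = fps_const ((-1) ^ j * b ^ j * inverse a ^ j) * fps_X ^ (j * k + (Suc j choose 2))"

definition shifted_sum :: "'a::field \<Rightarrow> 'a \<Rightarrow> nat \<Rightarrow> nat \<Rightarrow> 'a fps" where
  "shifted_sum a b k N = (\<Sum>n<N. fps_X ^ Suc n * qinv a (Suc n) * qinv b (Suc n + k))"

lemma choose2_Suc: "Suc (Suc j) choose 2 = Suc j + (Suc j choose 2)"
  by (simp add: numeral_2_eq_2)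

lemma le_choose2: "j \<le> Suc j choose 2"
  by (induction j) (simp_all add: choose2_Suc)

lemma X_power_dvd_qterm: "fps_X ^ (Suc j choose 2) dvd qterm a b k j"
  unfolding qterm_def power_add by (simp add: dvd_mult)

lemma X_power_dvd_qterm_mult:
  assumes "n \<le> m"
  shows "fps_X ^ n dvd qterm a b k m * f"
  using le_choose2[of m] assms
  by (intro dvd_mult2 dvd_trans[OF le_imp_power_dvd X_power_dvd_qterm]) simp

lemma qterm_0 [simp]: "qterm a b k 0 = 1"
  by (simp add: qterm_def numeral_2_eq_2)

lemma qterm_Suc:
  "qterm a b k (Suc j) = - (fps_const b * fps_const (inverse a) * fps_X ^ Suc k * qterm a b (Suc k) j)"
proof -
  have "Suc j * k + (Suc (Suc j) choose 2) = Suc k + (j * Suc k + (Suc j choose 2))"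
    by (simp add: choose2_Suc)
  then show ?thesis by (simp add: qterm_def power_add algebra_simps)
qed

lemma qterm_0_Suc:
  "qterm a b 0 (Suc j) = - (fps_const b * fps_const (inverse a) * fps_X ^ Suc j * qterm a b 0 j)"
  by (simp add: qterm_def choose2_Suc power_add algebra_simps)

lemma shifted_sum_by_parts:
  "fps_const a * shifted_sum a b k (Suc N) =
     qinv a (Suc N) * qinv b (Suc N + k) - qinv b (Suc k)
     - fps_const b * fps_X ^ Suc k * shifted_sum a b (Suc k) N"
proof (induction N arbitrary: k)
  case 0
  have u: "fps_const a * fps_X * qinv a (Suc 0) = qinv a (Suc 0) - 1"
    using qinv_Suc_diff[of a 0] by simp
  have "fps_const a * shifted_sum a b k (Suc 0) = (fps_const a * fps_X * qinv a (Suc 0)) * qinv b (Suc k)"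
    by (simp add: shifted_sum_def ac_simps)
  also have "\<dots> = qinv a (Suc 0) * qinv b (Suc k) - qinv b (Suc k)"
    unfolding u by (simp add: algebra_simps)
  finally show ?case by (simp add: shifted_sum_def)
next
  case (Suc N)
  define u1 u2 v1 v2 where "u1 = qinv a (Suc N)" and "u2 = qinv a (Suc (Suc N))"
    and "v1 = qinv b (Suc N + k)" and "v2 = qinv b (Suc (Suc N) + k)"
  have u: "fps_const a * fps_X ^ Suc (Suc N) * u2 = u2 - u1"
    using qinv_Suc_diff[of a "Suc N"] by (simp add: u1_def u2_def)
  have v: "fps_const b * fps_X ^ Suc (Suc N + k) * v2 = v2 - v1"
    using qinv_Suc_diff[of b "Suc N + k"] by (simp add: v1_def v2_def)
  have shifted_sum_Suc: "shifted_sum a b (Suc k) (Suc N) = shifted_sum a b (Suc k) N + fps_X ^ Suc N * u1 * v2"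
    by (simp add: shifted_sum_def u1_def v2_def)
  have X: "fps_X ^ Suc (Suc N + k) = fps_X ^ Suc k * (fps_X ^ Suc N :: 'a fps)"
    by (simp flip: power_add)
  have "fps_const a * shifted_sum a b k (Suc (Suc N))
      = fps_const a * shifted_sum a b k (Suc N) + fps_const a * fps_X ^ Suc (Suc N) * u2 * v2"
    by (simp add: shifted_sum_def u2_def v2_def algebra_simps)
  also have "\<dots> = u1 * v1 - qinv b (Suc k) - fps_const b * fps_X ^ Suc k * shifted_sum a b (Suc k) N
      + (u2 - u1) * v2"
    unfolding Suc.IH u by (simp add: u1_def v1_def)
  also have "\<dots> = u2 * v2 - qinv b (Suc k) - fps_const b * fps_X ^ Suc k * shifted_sum a b (Suc k) N
      - u1 * (fps_const b * fps_X ^ Suc (Suc N + k) * v2)"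
    unfolding v by (simp add: algebra_simps)
  also have "\<dots> = u2 * v2 - qinv b (Suc k) - fps_const b * fps_X ^ Suc k * shifted_sum a b (Suc k) (Suc N)"
    unfolding shifted_sum_Suc X by algebra
  finally show ?case by (simp add: u2_def v2_def)
qed

lemma qterm_telescope:
  "(\<Sum>j<N. (1 - fps_const (inverse a)) * qterm a b 0 j * qinv b j
          + fps_const (inverse a) * qterm a b 0 j * qinv b (Suc j))
   = 1 - qterm a b 0 N * qinv b N"
proof (induction N)
  case (Suc N)
  have v: "qinv b (Suc N) - qinv b N = fps_const b * fps_X ^ Suc N * qinv b (Suc N)"
    by (rule qinv_Suc_diff)
  have "(1 - fps_const (inverse a)) * qterm a b 0 N * qinv b N
        + fps_const (inverse a) * qterm a b 0 N * qinv b (Suc N)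
      = qterm a b 0 N * qinv b N + fps_const (inverse a) * qterm a b 0 N * (qinv b (Suc N) - qinv b N)"
    by (simp add: algebra_simps)
  also have "\<dots> = qterm a b 0 N * qinv b N - qterm a b 0 (Suc N) * qinv b (Suc N)"
    unfolding v qterm_0_Suc by (simp add: algebra_simps)
  finally show ?case using Suc.IH by simp
qed simp

context
  fixes a b :: "'a::field"
  assumes a_nonzero: "a \<noteq> 0"
begin

text \<open>The only use of \<open>a \<noteq> 0\<close>: the constant \<open>1/a\<close> inverts \<open>a\<close>.\<close>
private lemma inverse_a: "fps_const (inverse a) * fps_const a = 1"
  using a_nonzero by (simp flip: fps_const_mult)

lemma shifted_sum_closed:
  "shifted_sum a b k N = fps_const (inverse a) *
     (\<Sum>j<N. qterm a b k j * (qinv a (N - j) * qinv b (N + k) - qinv b (k + j + 1)))"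
proof (induction N arbitrary: k)
  case 0
  then show ?case by (simp add: shifted_sum_def)
next
  case (Suc N)
  define c where "c = fps_const (inverse a)"
  define S where "S = (\<Sum>j<N. qterm a b (Suc k) j *
      (qinv a (N - j) * qinv b (N + Suc k) - qinv b (Suc k + j + 1)))"
  have split_first: "(\<Sum>j<Suc N. qterm a b k j * (qinv a (Suc N - j) * qinv b (Suc N + k) - qinv b (k + j + 1)))
      = (qinv a (Suc N) * qinv b (Suc N + k) - qinv b (Suc k)) - fps_const b * c * fps_X ^ Suc k * S"
    unfolding sum.lessThan_Suc_shift qterm_Suc S_def c_def
    by (simp add: sum_distrib_left sum_negf mult.assoc)
  have "shifted_sum a b k (Suc N) = c * (fps_const a * shifted_sum a b k (Suc N))"
    using inverse_a by (simp add: c_def flip: mult.assoc)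
  also have "\<dots> = c * (qinv a (Suc N) * qinv b (Suc N + k) - qinv b (Suc k)
      - fps_const b * fps_X ^ Suc k * (c * S))"
    unfolding shifted_sum_by_parts Suc.IH c_def S_def ..
  also have "\<dots> = c * (\<Sum>j<Suc N. qterm a b k j * (qinv a (Suc N - j) * qinv b (Suc N + k) - qinv b (k + j + 1)))"
    unfolding split_first by (simp add: ac_simps)
  finally show ?case by (simp add: c_def)
qed

lemma truncated_identity:
  defines "c \<equiv> fps_const (inverse a)"
  shows "1 + shifted_sum a b 0 N =
      (1 - c) * (\<Sum>j<Suc N. qterm a b 0 j * qinv b j)
      + c * (\<Sum>j<N. qterm a b 0 j) * (qinv a N * qinv b N)
      + c * (qterm a b 0 N * qinv b N
             + (\<Sum>j<N. qterm a b 0 j * (qinv a (N - j) - qinv a N) * qinv b N))"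
proof -
  define S1 S2 S3 where "S1 = (\<Sum>j<N. qterm a b 0 j * qinv b j)"
    and "S2 = (\<Sum>j<N. qterm a b 0 j * qinv b (Suc j))"
    and "S3 = (\<Sum>j<N. qterm a b 0 j * qinv a (N - j) * qinv b N)"
  define E Q W R where "E = qterm a b 0 N * qinv b N" and "Q = (\<Sum>j<N. qterm a b 0 j)"
    and "W = qinv a N * qinv b N"
    and "R = (\<Sum>j<N. qterm a b 0 j * (qinv a (N - j) - qinv a N) * qinv b N)"
  have T: "shifted_sum a b 0 N = c * (S3 - S2)"
    unfolding shifted_sum_closed S2_def S3_def c_def sum_subtractf[symmetric]
    by (simp add: algebra_simps)
  have tele: "(1 - c) * S1 + c * S2 = 1 - E"
    using qterm_telescope[of a b N]
    by (simp add: S1_def S2_def E_def c_def sum.distrib sum_distrib_left mult.assoc)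
  have rem: "Q * W + R = S3"
    unfolding Q_def W_def R_def S3_def sum_distrib_right sum.distrib[symmetric] by (simp add: algebra_simps)
  have regroup: "(1 - c) * (s1 + e) + c * q * w + c * (e + r) = ((1 - c) * s1 + c * s2) + e + c * (q * w + r) - c * s2"
    for s1 s2 e q w r :: "'a fps"
    by (simp add: algebra_simps)
  have "1 + shifted_sum a b 0 N = 1 + c * (S3 - S2)"
    by (simp add: T)
  also have "\<dots> = ((1 - c) * S1 + c * S2) + E + c * (Q * W + R) - c * S2"
    unfolding tele rem by (simp add: algebra_simps)
  also have "\<dots> = (1 - c) * (S1 + E) + c * Q * W + c * (E + R)"
    by (rule regroup[symmetric])
  finally show ?thesis
    by (simp add: S1_def E_def Q_def W_def R_def)
qed

lemma truncated_congruence: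
  "fps_X ^ N dvd (1 + shifted_sum a b 0 N) -
      (fps_const (1 - inverse a) * (\<Sum>j<Suc N. qterm a b 0 j * qinv b j)
       + fps_const (inverse a) * (\<Sum>j<N. qterm a b 0 j) * (qinv a N * qinv b N))"
proof -
  have term_N: "fps_X ^ N dvd qterm a b 0 N * qinv b N"
    by (rule X_power_dvd_qterm_mult) simp
  have "fps_X ^ N dvd qterm a b 0 j * (qinv a (N - j) - qinv a N) * qinv b N" if "j < N" for j
  proof -
    have "fps_X ^ ((Suc j choose 2) + Suc (N - j)) dvd qterm a b 0 j * (qinv a (N - j) - qinv a N)"
      unfolding power_add by (intro mult_dvd_mono X_power_dvd_qterm qinv_stable) simp
    moreover have "N \<le> (Suc j choose 2) + Suc (N - j)"
      using le_choose2[of j] that by simp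
    ultimately show ?thesis
      by (meson dvd_mult2 dvd_trans le_imp_power_dvd)
  qed
  then have "fps_X ^ N dvd fps_const (inverse a) * (qterm a b 0 N * qinv b N
      + (\<Sum>j<N. qterm a b 0 j * (qinv a (N - j) - qinv a N) * qinv b N))"
    by (rule dvd_mult[OF dvd_add[OF term_N dvd_sum]]) simp
  moreover have "fps_const (1 - inverse a) = 1 - fps_const (inverse a)"
    by simp
  ultimately show ?thesis
    by (subst truncated_identity) (simp only: add_diff_cancel_left')
qed

lemma qseries_identity:
  defines "L \<equiv> \<lambda>n. fps_X ^ Suc n * qinv a (Suc n) * qinv b (Suc n)"
    and "R1 \<equiv> \<lambda>n. qterm a b 0 (Suc n) * qinv b (Suc n)"
    and "R2 \<equiv> qterm a b 0"
    and "P \<equiv> \<lambda>N. qinv a N * qinv b N"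
  shows "summable L \<and> summable R1 \<and> summable R2 \<and> convergent P \<and>
    1 + (\<Sum>n. L n) = fps_const (1 - inverse a) * (1 + (\<Sum>n. R1 n))
      + fps_const (inverse a) * (\<Sum>n. R2 n) * lim P"
proof -
  have L_dvd: "fps_X ^ n dvd L n" for n
    unfolding L_def by (intro dvd_mult2 le_imp_power_dvd) simp
  have R1_dvd: "fps_X ^ n dvd R1 n" for n
    unfolding R1_def by (rule X_power_dvd_qterm_mult) simp
  have R2_dvd: "fps_X ^ n dvd R2 n" for n
    using X_power_dvd_qterm_mult[of n n a b 0 1] by (simp add: R2_def)
  have P_dvd: "fps_X ^ n dvd P (Suc n) - P n" for n
    unfolding P_def by (rule dvd_trans[OF le_imp_power_dvd qinv_product_step]) simp
  obtain GL where GL: "L sums GL" "\<And>N. fps_X ^ N dvd GL - (\<Sum>n<N. L n)"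
    using fps_sums_of_X_power_dvd[OF L_dvd] by blast
  obtain G1 where G1: "R1 sums G1" "\<And>N. fps_X ^ N dvd G1 - (\<Sum>n<N. R1 n)"
    using fps_sums_of_X_power_dvd[OF R1_dvd] by blast
  obtain G2 where G2: "R2 sums G2" "\<And>N. fps_X ^ N dvd G2 - (\<Sum>n<N. R2 n)"
    using fps_sums_of_X_power_dvd[OF R2_dvd] by blast
  obtain GP where GP: "P \<longlonglongrightarrow> GP" "\<And>N. fps_X ^ N dvd GP - P N"
    using fps_limit_of_X_power_dvd_steps[OF P_dvd] by blast
  have finite: "fps_X ^ N dvd (1 + (\<Sum>n<N. L n)) -
      (fps_const (1 - inverse a) * (1 + (\<Sum>n<N. R1 n)) + fps_const (inverse a) * (\<Sum>n<N. R2 n) * P N)"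
    for N
  proof -
    have "(\<Sum>n<N. L n) = shifted_sum a b 0 N"
      by (simp add: L_def shifted_sum_def)
    moreover have "1 + (\<Sum>n<N. R1 n) = (\<Sum>j<Suc N. qterm a b 0 j * qinv b j)"
      unfolding sum.lessThan_Suc_shift by (simp add: R1_def)
    ultimately show ?thesis
      using truncated_congruence[of N] by (simp add: R2_def P_def)
  qed
  have "1 + GL = fps_const (1 - inverse a) * (1 + G1) + fps_const (inverse a) * G2 * GP"
    by (rule fps_identity_limit[OF _ _ _ _ finite]) (simp_all add: GL G1 G2 GP)
  with GL G1 G2 GP show ?thesis
    by (simp add: sums_unique[symmetric] sums_summable convergentI limI)
qed

end

theorem mainTheorem1:
  fixes a b :: ratfun
  defines "a \<equiv> var_a" and "b \<equiv> var_b"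
  defines "L \<equiv> (\<lambda>n::nat. fps_X ^ n * inverse (qpoch (fps_const a * fps_X) n * qpoch (fps_const b * fps_X) n))"
      and "R1 \<equiv> (\<lambda>n::nat. fps_const ((-1) ^ n * b ^ n * inverse a ^ n) * fps_X ^ ((n + 1) choose 2) * inverse (qpoch (fps_const b * fps_X) n))"
      and "R2 \<equiv> (\<lambda>n::nat. fps_const ((-1) ^ n * b ^ n * inverse a ^ n) * fps_X ^ ((n + 1) choose 2))"
      and "P \<equiv> (\<lambda>N::nat. \<Prod>k\<in>{1..N}. inverse ((1 - fps_const a * fps_X ^ k) * (1 - fps_const b * fps_X ^ k)))"
  shows "summable (\<lambda>n. L (Suc n)) \<and> summable (\<lambda>n. R1 (Suc n)) \<and> summable R2 \<and> convergent P \<and>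
    1 + (\<Sum>n. L (Suc n)) =
      fps_const (1 - inverse a) * (1 + (\<Sum>n. R1 (Suc n)))
      + fps_const (inverse a) * (\<Sum>n. R2 n) * lim P"
proof -
  have a_nonzero: "a \<noteq> 0"
    unfolding a_def var_a_def by (simp add: Zero_fract_def eq_fract)
  have "(\<lambda>n. L (Suc n)) = (\<lambda>n. fps_X ^ Suc n * qinv a (Suc n) * qinv b (Suc n))"
    by (simp add: L_def qinv_def fps_inverse_mult mult.assoc)
  moreover have "(\<lambda>n. R1 (Suc n)) = (\<lambda>n. qterm a b 0 (Suc n) * qinv b (Suc n))"
    by (simp add: R1_def qterm_def qinv_def)
  moreover have "R2 = qterm a b 0"
    by (simp add: R2_def qterm_def fun_eq_iff)
  moreover have "P = (\<lambda>N. qinv a N * qinv b N)"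
  proof
    show "P N = qinv a N * qinv b N" for N
      by (induction N) (simp_all add: P_def qinv_Suc fps_inverse_mult ac_simps)
  qed
  ultimately show ?thesis
    using qseries_identity[OF a_nonzero, of b] by simp
qed

end
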